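(* Let $\mathcal B$ be a BMC with $\mathbf c^*_q<\infty$ for all $q\in\mathcal T$, and consider the Q-learning process with learning rates $\lambda_i\in[0,1]$ satisfying $\sum_{i=0}^\infty\lambda_i=\infty$, a fixed selection distribution with $p_q\ge p_{\min}>0$ for all $q$, and initial value $Q_0=\kappa\mathbf c^*$ for a scalar $\kappa\ge0$. Then $\lim_{i\to\infty}\mathbb E Q_i=\mathbf c^*$.
   Context: A branching Markov chain (BMC) is $\mathcal B=(\mathcal T,p,c)$ with $\mathcal T$ a finite set of types, $p(q)$ for each $q\in\mathcal T$ a probability distribution with finite support over finite lists $\mathcal T^*$ of types (the offspring distribution), and $c:\mathcal T\to\mathbb R_{>0}$ a strictly positive cost. For a list $\alpha$, $|\alpha|$ is its length and $\alpha_i$ its $i$-th element. $\mathbf c^*_q\in[0,\infty]$ denotes the expected total cost until extinction starting from the single entity $q$; equivalently $\mathbf c^*$ is the least fixed point in $[0,\infty]^{\mathcal T}$ of $F(\mathbf x)_q=c(q)+\sum_\alpha p(q)(\alpha)\sum_{i=1}^{|\alpha|}\mathbf x_{\alpha_i}$. Q-learning process for a BMC: given deterministic learning rates $\lambda_i\in[0,1]$, a probability distribution $(p_q)_{q\in\mathcal T}$ and an initial vector $Q_0\in\mathbb R_{\ge0}^{\mathcal T}$, at each step $i=0,1,2,\dots$ a type $q_i$ is selected with probability $p_{q_i}$ independently of all previous randomness, then a list $\beta^i$ is drawn from $p(q_i)$ independently, and $Q_{i+1}(q_i)=(1-\lambda_i)Q_i(q_i)+\lambda_i\big(c(q_i)+\sum_{j=1}^{|\beta^i|}Q_i(\beta^i_j)\big)$,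 while $Q_{i+1}(q)=Q_i(q)$ for $q\ne q_i$. $\mathbb E Q_i$ is the componentwise expectation. *)

theory Defs
  imports "HOL-Probability.Probability"
begin

text \<open>A branching Markov chain: types are a finite type 'q; offspring distribution
  p q :: 'q list pmf (finite support); cost c q > 0.\<close>

definition is_BMC :: "('q::finite \<Rightarrow> 'q list pmf) \<Rightarrow> ('q \<Rightarrow> real) \<Rightarrow> bool" where
  "is_BMC p c \<longleftrightarrow> (\<forall>q. finite (set_pmf (p q))) \<and> (\<forall>q. c q > 0)"

definition bmc_F :: "('q \<Rightarrow> 'q list pmf) \<Rightarrow> ('q \<Rightarrow> real) \<Rightarrow> ('q \<Rightarrow> ennreal) \<Rightarrow> ('q \<Rightarrow> ennreal)" where
  "bmc_F p c x = (\<lambda>q. ennreal (c q) +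
      (\<Sum>\<alpha>\<in>set_pmf (p q). ennreal (pmf (p q) \<alpha>) * (\<Sum>i<length \<alpha>. x (\<alpha> ! i))))"

text \<open>Expected total cost until extinction: least fixed point of F.\<close>
definition cstar :: "('q \<Rightarrow> 'q list pmf) \<Rightarrow> ('q \<Rightarrow> real) \<Rightarrow> ('q \<Rightarrow> ennreal)" where
  "cstar p c = lfp (bmc_F p c)"

text \<open>Law of Q_i in the Q-learning process (selection distribution sel, learning rates lr,
  initial vector Q0).  Q_i is a random vector; Qlaw gives its distribution.\<close>
primrec Qlaw :: "('q \<Rightarrow> 'q list pmf) \<Rightarrow> ('q \<Rightarrow> real) \<Rightarrow> (nat \<Rightarrow> real) \<Rightarrow> 'q pmf
                  \<Rightarrow> ('q \<Rightarrow> real) \<Rightarrow> nat \<Rightarrow> ('q \<Rightarrow> real) pmf" where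
  "Qlaw p c lr sel Q0 0 = return_pmf Q0"
| "Qlaw p c lr sel Q0 (Suc i) =
     do { Q \<leftarrow> Qlaw p c lr sel Q0 i;
          q \<leftarrow> sel;
          \<beta> \<leftarrow> p q;
          return_pmf (Q(q := (1 - lr i) * Q q + lr i * (c q + (\<Sum>j<length \<beta>. Q (\<beta> ! j)))))
        }"

definition EQ :: "('q \<Rightarrow> 'q list pmf) \<Rightarrow> ('q \<Rightarrow> real) \<Rightarrow> (nat \<Rightarrow> real) \<Rightarrow> 'q pmf
                  \<Rightarrow> ('q \<Rightarrow> real) \<Rightarrow> nat \<Rightarrow> 'q \<Rightarrow> real" where
  "EQ p c lr sel Q0 i q = measure_pmf.expectation (Qlaw p c lr sel Q0 i) (\<lambda>Q. Q q)"

end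

theory Submission
  imports Defs
begin

text \<open>Taking expectations turns the Q-learning update into the deterministic recursion
  \<open>E (i+1) q = E i q + p\<^sub>q \<lambda>\<^sub>i (c q + M (E i) q - E i q)\<close> with the linear offspring-mean
  operator \<open>M\<close>, and \<open>c\<^sup>* = c + M c\<^sup>*\<close>. Since costs are positive, \<open>M c\<^sup>* \<le> (1 - \<delta>) c\<^sup>*\<close>
  for some \<open>\<delta> > 0\<close>. Starting from \<open>\<kappa> c\<^sup>*\<close>, the error \<open>E i - c\<^sup>*\<close> is therefore bounded
  componentwise by \<open>|\<kappa> - 1|\<close> times \<open>\<Prod>k<i. (1 - p_min \<delta> \<lambda>\<^sub>k)\<close> times \<open>c\<^sup>*\<close>, and this
  product tends to 0 because \<open>\<Sum> \<lambda>\<^sub>k\<close> diverges.\<close>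

definition offspring_mean :: "('q \<Rightarrow> 'q list pmf) \<Rightarrow> 'q \<Rightarrow> ('q \<Rightarrow> real) \<Rightarrow> real" where
  "offspring_mean p q x = (\<Sum>\<alpha>\<in>set_pmf (p q). pmf (p q) \<alpha> * (\<Sum>j<length \<alpha>. x (\<alpha> ! j)))"

lemma offspring_mean_diff:
  "offspring_mean p q (\<lambda>q'. f q' - g q') = offspring_mean p q f - offspring_mean p q g"
  unfolding offspring_mean_def
  by (simp add: sum_subtractf algebra_simps sum_distrib_left[symmetric] flip: sum_diff_distrib)

lemma offspring_mean_nonneg:
  assumes "\<And>q'. x q' \<ge> 0"
  shows "offspring_mean p q x \<ge> 0"
  unfolding offspring_mean_def using assms by (auto intro!: sum_nonneg mult_nonneg_nonneg)

lemma abs_offspring_mean_le: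
  assumes "\<And>q'. \<bar>y q'\<bar> \<le> t * x q'"
  shows "\<bar>offspring_mean p q y\<bar> \<le> t * offspring_mean p q x"
proof -
  have "\<bar>offspring_mean p q y\<bar> \<le> (\<Sum>\<alpha>\<in>set_pmf (p q). \<bar>pmf (p q) \<alpha> * (\<Sum>j<length \<alpha>. y (\<alpha> ! j))\<bar>)"
    unfolding offspring_mean_def by (rule sum_abs)
  also have "\<dots> \<le> (\<Sum>\<alpha>\<in>set_pmf (p q). pmf (p q) \<alpha> * (\<Sum>j<length \<alpha>. t * x (\<alpha> ! j)))"
  proof (intro sum_mono)
    fix \<alpha>
    have "\<bar>\<Sum>j<length \<alpha>. y (\<alpha> ! j)\<bar> \<le> (\<Sum>j<length \<alpha>. \<bar>y (\<alpha> ! j)\<bar>)" by (rule sum_abs)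
    also have "\<dots> \<le> (\<Sum>j<length \<alpha>. t * x (\<alpha> ! j))" by (intro sum_mono assms)
    finally show "\<bar>pmf (p q) \<alpha> * (\<Sum>j<length \<alpha>. y (\<alpha> ! j))\<bar>
        \<le> pmf (p q) \<alpha> * (\<Sum>j<length \<alpha>. t * x (\<alpha> ! j))"
      by (simp add: abs_mult mult_left_mono)
  qed
  also have "\<dots> = t * offspring_mean p q x"
    unfolding offspring_mean_def by (simp add: sum_distrib_left[symmetric] algebra_simps)
  finally show ?thesis .
qed

lemma finite_set_pmf_Qlaw:
  fixes p :: "'q::finite \<Rightarrow> 'q list pmf"
  assumes "\<And>q. finite (set_pmf (p q))"
  shows "finite (set_pmf (Qlaw p c lr sel Q0 i))"
  by (induction i) (auto simp: set_bind_pmf assms intro!: finite_UN_I)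

lemma expectation_offspring_update:
  assumes fin: "finite (set_pmf (p q0))"
  shows "measure_pmf.expectation
      (p q0 \<bind> (\<lambda>\<beta>. return_pmf (Q(q0 := (1 - a) * Q q0 + a * (c q0 + (\<Sum>j<length \<beta>. Q (\<beta> ! j)))))))
      (\<lambda>Q'. Q' q)
    = (if q0 = q then (1 - a) * Q q + a * (c q + offspring_mean p q Q) else Q q)"
proof -
  have sum1: "(\<Sum>\<beta>\<in>set_pmf (p q0). pmf (p q0) \<beta>) = 1"
    by (rule sum_pmf_eq_1[OF fin]) simp
  have "measure_pmf.expectation
      (p q0 \<bind> (\<lambda>\<beta>. return_pmf (Q(q0 := (1 - a) * Q q0 + a * (c q0 + (\<Sum>j<length \<beta>. Q (\<beta> ! j)))))))
      (\<lambda>Q'. Q' q)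
    = (\<Sum>\<beta>\<in>set_pmf (p q0). pmf (p q0) \<beta> *
         (if q0 = q then (1 - a) * Q q0 + a * (c q0 + (\<Sum>j<length \<beta>. Q (\<beta> ! j))) else Q q))"
    by (subst pmf_expectation_bind[of "set_pmf (p q0)"]) (auto simp: fin eq_commute intro!: sum.cong)
  also have "\<dots> = (if q0 = q then (1 - a) * Q q + a * (c q + offspring_mean p q Q) else Q q)"
  proof (cases "q0 = q")
    case True
    have "(\<Sum>\<beta>\<in>set_pmf (p q0). pmf (p q0) \<beta> * ((1 - a) * Q q0 + a * (c q0 + (\<Sum>j<length \<beta>. Q (\<beta> ! j)))))
        = (\<Sum>\<beta>\<in>set_pmf (p q0). pmf (p q0) \<beta> * ((1 - a) * Q q0 + a * c q0)
             + a * (pmf (p q0) \<beta> * (\<Sum>j<length \<beta>. Q (\<beta> ! j))))"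
      by (intro sum.cong) (auto simp: algebra_simps)
    also have "\<dots> = (\<Sum>\<beta>\<in>set_pmf (p q0). pmf (p q0) \<beta>) * ((1 - a) * Q q0 + a * c q0)
        + a * offspring_mean p q0 Q"
      by (simp only: sum.distrib sum_distrib_right[symmetric] sum_distrib_left[symmetric]
          offspring_mean_def)
    finally show ?thesis using True sum1 by (simp add: algebra_simps)
  next
    case False
    then show ?thesis using sum1 by (simp add: sum_distrib_right[symmetric])
  qed
  finally show ?thesis .
qed

lemma expectation_Qlearning_step:
  fixes p :: "'q::finite \<Rightarrow> 'q list pmf"
  assumes fin: "\<And>q. finite (set_pmf (p q))"
  shows "measure_pmf.expectation
      (sel \<bind> (\<lambda>q0. p q0 \<bind> (\<lambda>\<beta>. return_pmf
        (Q(q0 := (1 - a) * Q q0 + a * (c q0 + (\<Sum>j<length \<beta>. Q (\<beta> ! j))))))))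
      (\<lambda>Q'. Q' q)
    = Q q + pmf sel q * a * (c q + offspring_mean p q Q - Q q)"
proof -
  define V where "V = (1 - a) * Q q + a * (c q + offspring_mean p q Q)"
  have "measure_pmf.expectation
      (sel \<bind> (\<lambda>q0. p q0 \<bind> (\<lambda>\<beta>. return_pmf
        (Q(q0 := (1 - a) * Q q0 + a * (c q0 + (\<Sum>j<length \<beta>. Q (\<beta> ! j))))))))
      (\<lambda>Q'. Q' q)
    = (\<Sum>q0\<in>UNIV. pmf sel q0 * (if q0 = q then V else Q q))"
    by (subst pmf_expectation_bind[of UNIV])
       (auto simp: expectation_offspring_update fin set_bind_pmf V_def intro!: finite_UN_I sum.cong)
  also have "\<dots> = (\<Sum>q0\<in>UNIV. pmf sel q0 * Q q + (if q0 = q then pmf sel q * (V - Q q) else 0))"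
    by (intro sum.cong) (auto simp: algebra_simps)
  also have "\<dots> = Q q + pmf sel q * (V - Q q)"
    using sum_pmf_eq_1[of UNIV sel] by (simp add: sum.distrib sum_distrib_right[symmetric])
  finally show ?thesis by (simp add: V_def algebra_simps)
qed

lemma EQ_Suc:
  fixes p :: "'q::finite \<Rightarrow> 'q list pmf"
  assumes fin: "\<And>q. finite (set_pmf (p q))"
  shows "EQ p c lr sel Q0 (Suc i) q = EQ p c lr sel Q0 i q
     + pmf sel q * lr i * (c q + offspring_mean p q (EQ p c lr sel Q0 i) - EQ p c lr sel Q0 i q)"
proof -
  let ?M = "Qlaw p c lr sel Q0 i"
  have fM: "finite (set_pmf ?M)" by (rule finite_set_pmf_Qlaw[OF fin])
  have "EQ p c lr sel Q0 (Suc i) q = measure_pmf.expectation ?M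
      (\<lambda>Q. Q q + pmf sel q * lr i * (c q + offspring_mean p q Q - Q q))"
    unfolding EQ_def
    by (simp only: Qlaw.simps, subst pmf_expectation_bind[of "set_pmf ?M"])
       (auto simp: fM fin expectation_Qlearning_step integral_measure_pmf[OF fM] set_bind_pmf
         intro!: finite_UN_I)
  also have "\<dots> = EQ p c lr sel Q0 i q
     + pmf sel q * lr i * (c q + offspring_mean p q (EQ p c lr sel Q0 i) - EQ p c lr sel Q0 i q)"
    unfolding EQ_def offspring_mean_def
    by (simp add: integrable_measure_pmf_finite[OF fM] integral_sum integral_mult_right_zero
        algebra_simps)
  finally show ?thesis .
qed

lemma mono_bmc_F: "mono (bmc_F p c)"
  unfolding bmc_F_def
  by (intro monoI le_funI add_left_mono sum_mono mult_left_mono) (auto simp: le_fun_def)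

lemma cstar_fixpoint_real:
  fixes p :: "'q::finite \<Rightarrow> 'q list pmf"
  assumes "is_BMC p c" and "\<forall>q. cstar p c q < \<infinity>"
  shows "enn2real (cstar p c q) = c q + offspring_mean p q (\<lambda>q'. enn2real (cstar p c q'))"
proof -
  define x where "x = (\<lambda>q. enn2real (cstar p c q))"
  have cx: "cstar p c q = ennreal (x q)" for q
    using assms(2) by (simp add: x_def ennreal_enn2real_if less_top)
  have x0: "x q \<ge> 0" for q by (simp add: x_def)
  have c0: "c q \<ge> 0" using assms(1) by (simp add: is_BMC_def less_imp_le)
  have M0: "offspring_mean p q x \<ge> 0" by (rule offspring_mean_nonneg[OF x0])
  have sum_lists: "(\<Sum>j<length \<alpha>. ennreal (x (\<alpha> ! j))) = ennreal (\<Sum>j<length \<alpha>. x (\<alpha> ! j))" for \<alpha>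
    by (rule sum_ennreal) (simp add: x0)
  have mult_pmf: "ennreal (pmf (p q) \<alpha>) * ennreal (\<Sum>j<length \<alpha>. x (\<alpha> ! j))
      = ennreal (pmf (p q) \<alpha> * (\<Sum>j<length \<alpha>. x (\<alpha> ! j)))" for \<alpha>
    by (rule ennreal_mult'[symmetric]) simp
  have sum_offspring: "(\<Sum>\<alpha>\<in>set_pmf (p q). ennreal (pmf (p q) \<alpha> * (\<Sum>j<length \<alpha>. x (\<alpha> ! j))))
      = ennreal (offspring_mean p q x)"
    unfolding offspring_mean_def by (rule sum_ennreal) (simp add: x0 sum_nonneg)
  have "ennreal (x q) = bmc_F p c (cstar p c) q"
    using lfp_unfold[OF mono_bmc_F, of p c] by (metis cstar_def cx)
  also have "\<dots> = ennreal (c q + offspring_mean p q x)"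
    unfolding bmc_F_def cx sum_lists mult_pmf sum_offspring using c0 M0 by simp
  finally have "x q = c q + offspring_mean p q x"
    by (subst (asm) ennreal_inj) (use x0 c0 M0 in auto)
  then show ?thesis unfolding x_def .
qed

lemma offspring_mean_contraction:
  fixes x :: "'q::finite \<Rightarrow> real"
  assumes fixpt: "\<And>q. x q = c q + offspring_mean p q x"
    and cpos: "\<And>q. c q > 0" and x0: "\<And>q. x q \<ge> 0"
  obtains \<delta> where "0 < \<delta>" "\<delta> \<le> 1" "\<And>q. offspring_mean p q x \<le> (1 - \<delta>) * x q"
proof
  have M0: "offspring_mean p q x \<ge> 0" for q by (rule offspring_mean_nonneg[OF x0])
  have xpos: "x q > 0" for q using fixpt[of q] cpos[of q] M0[of q] by linarith
  define \<delta> where "\<delta> = Min (range (\<lambda>q. c q / x q))"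
  have \<delta>le: "\<delta> \<le> c q / x q" for q unfolding \<delta>_def by auto
  show "0 < \<delta>" unfolding \<delta>_def using cpos xpos by auto
  have "c undefined / x undefined \<le> 1"
    using fixpt M0 xpos by (simp add: divide_le_eq_1)
  then show "\<delta> \<le> 1" using \<delta>le[of undefined] by linarith
  fix q
  have "\<delta> * x q \<le> c q" using \<delta>le[of q] xpos[of q] by (simp add: pos_le_divide_eq)
  then show "offspring_mean p q x \<le> (1 - \<delta>) * x q" using fixpt[of q] by (simp add: algebra_simps)
qed

lemma prod_one_minus_LIMSEQ_zero:
  fixes a :: real and lr :: "nat \<Rightarrow> real"
  assumes lr: "\<forall>i. 0 \<le> lr i \<and> lr i \<le> 1" and "0 < a" "a \<le> 1"
    and diverge: "filterlim (\<lambda>n. \<Sum>i<n. lr i) at_top sequentially"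
  shows "(\<lambda>n. \<Prod>k<n. (1 - a * lr k)) \<longlonglongrightarrow> 0"
proof (rule Lim_null_comparison)
  have "(\<Prod>k<n. (1 - a * lr k)) \<le> exp (- (a * (\<Sum>i<n. lr i)))" for n
  proof -
    have "(\<Prod>k<n. (1 - a * lr k)) \<le> (\<Prod>k<n. exp (- (a * lr k)))"
      using lr \<open>a \<le> 1\<close> exp_ge_add_one_self[of "- (a * lr _)"]
      by (intro prod_mono) (auto intro!: mult_le_one simp: algebra_simps)
    also have "\<dots> = exp (- (a * (\<Sum>i<n. lr i)))"
      by (simp add: exp_sum[symmetric] sum_distrib_left sum_negf)
    finally show ?thesis .
  qed
  moreover have "0 \<le> (\<Prod>k<n. (1 - a * lr k))" for n
    using lr \<open>a \<le> 1\<close> by (auto intro!: prod_nonneg mult_le_one)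
  ultimately show "\<forall>\<^sub>F n in sequentially. norm (\<Prod>k<n. (1 - a * lr k)) \<le> exp (- (a * (\<Sum>i<n. lr i)))"
    by auto
  have "filterlim (\<lambda>n. a * (\<Sum>i<n. lr i)) at_top sequentially"
    by (rule filterlim_tendsto_pos_mult_at_top[OF tendsto_const \<open>0 < a\<close> diverge])
  then have "filterlim (\<lambda>n. - (a * (\<Sum>i<n. lr i))) at_bot sequentially"
    by (simp add: filterlim_uminus_at_bot)
  then show "(\<lambda>n. exp (- (a * (\<Sum>i<n. lr i)))) \<longlonglongrightarrow> 0"
    by (rule filterlim_compose[OF exp_at_bot])
qed

lemma EQ_error_bound:
  fixes p :: "'q::finite \<Rightarrow> 'q list pmf" and x :: "'q \<Rightarrow> real"
  assumes fin: "\<And>q. finite (set_pmf (p q))"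
    and fixpt: "\<And>q. x q = c q + offspring_mean p q x" and x0: "\<And>q. x q \<ge> 0"
    and contr: "\<And>q. offspring_mean p q x \<le> (1 - \<delta>) * x q" and "0 < \<delta>"
    and lr: "\<forall>i. 0 \<le> lr i \<and> lr i \<le> 1"
    and sel: "\<forall>q. pmf sel q \<ge> pmin" and "pmin \<ge> 0" and a1: "pmin * \<delta> \<le> 1"
  shows "\<bar>EQ p c lr sel (\<lambda>q'. \<kappa> * x q') i q - x q\<bar>
    \<le> \<bar>\<kappa> - 1\<bar> * (\<Prod>k<i. (1 - pmin * \<delta> * lr k)) * x q"
proof (induction i arbitrary: q)
  case 0
  have "\<kappa> * x q - x q = (\<kappa> - 1) * x q" by (simp add: algebra_simps)
  then show ?case using x0[of q] by (simp add: EQ_def abs_mult)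
next
  case (Suc i)
  define E where "E = EQ p c lr sel (\<lambda>q'. \<kappa> * x q') i"
  define T where "T = \<bar>\<kappa> - 1\<bar> * (\<Prod>k<i. (1 - pmin * \<delta> * lr k))"
  define e where "e = (\<lambda>q'. E q' - x q')"
  define s where "s = pmf sel q * lr i"
  have T0: "T \<ge> 0" unfolding T_def using lr a1
    by (auto intro!: prod_nonneg mult_nonneg_nonneg mult_le_one)
  have s0: "0 \<le> s" and s1: "s \<le> 1" and sa: "pmin * \<delta> * lr i \<le> s * \<delta>"
    using lr sel pmf_le_1[of sel q] \<open>0 < \<delta>\<close>
    by (auto simp: s_def intro!: mult_le_one mult_right_mono)
  have step: "EQ p c lr sel (\<lambda>q'. \<kappa> * x q') (Suc i) q - x q = (1 - s) * e q + s * offspring_mean p q e"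
    using fixpt[of q]
    by (simp add: EQ_Suc[OF fin] e_def offspring_mean_diff s_def E_def algebra_simps)
  have "\<bar>(1 - s) * e q + s * offspring_mean p q e\<bar> \<le> (1 - s) * \<bar>e q\<bar> + s * \<bar>offspring_mean p q e\<bar>"
    using s0 s1 by (simp add: abs_mult abs_triangle_ineq[THEN order_trans])
  also have "\<dots> \<le> (1 - s) * (T * x q) + s * (T * offspring_mean p q x)"
    using Suc.IH abs_offspring_mean_le[of e T x p q] s0 s1
    by (intro add_mono mult_left_mono) (auto simp: e_def E_def T_def)
  also have "\<dots> \<le> (1 - s) * (T * x q) + s * (T * ((1 - \<delta>) * x q))"
    using contr[of q] T0 s0 s1 by (intro add_mono mult_left_mono) auto
  also have "\<dots> = T * x q * (1 - s * \<delta>)" by (simp add: algebra_simps)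
  also have "\<dots> \<le> T * x q * (1 - pmin * \<delta> * lr i)"
    using sa T0 x0[of q] by (intro mult_left_mono) auto
  finally show ?case by (simp add: step T_def algebra_simps)
qed

theorem lemma4:
  fixes p :: "'q::finite \<Rightarrow> 'q list pmf" and c :: "'q \<Rightarrow> real"
    and lr :: "nat \<Rightarrow> real" and sel :: "'q pmf" and pmin \<kappa> :: real
  assumes "is_BMC p c"
    and "\<forall>q. cstar p c q < \<infinity>"
    and "\<forall>i. 0 \<le> lr i \<and> lr i \<le> 1"
    and "filterlim (\<lambda>n. \<Sum>i<n. lr i) at_top sequentially"
    and "pmin > 0" and "\<forall>q. pmf sel q \<ge> pmin"
    and "\<kappa> \<ge> 0"
  shows "\<forall>q. (\<lambda>i. EQ p c lr sel (\<lambda>q'. \<kappa> * enn2real (cstar p c q')) i q)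
              \<longlonglongrightarrow> enn2real (cstar p c q)"
proof
  fix q
  define x where "x = (\<lambda>q. enn2real (cstar p c q))"
  have fin: "\<And>q. finite (set_pmf (p q))" and cpos: "\<And>q. c q > 0"
    using assms(1) by (auto simp: is_BMC_def)
  have x0: "\<And>q. x q \<ge> 0" by (simp add: x_def)
  have fixpt: "\<And>q. x q = c q + offspring_mean p q x"
    unfolding x_def by (rule cstar_fixpoint_real[OF assms(1,2)])
  obtain \<delta> where \<delta>: "0 < \<delta>" "\<delta> \<le> 1" "\<And>q. offspring_mean p q x \<le> (1 - \<delta>) * x q"
    using offspring_mean_contraction[OF fixpt cpos x0] by blast
  have "pmin \<le> 1" using assms(6) pmf_le_1[of sel q] by (meson order_trans)
  then have a: "0 < pmin * \<delta>" "pmin * \<delta> \<le> 1"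
    using assms(5) \<delta> by (auto intro: mult_le_one)
  have "(\<lambda>i. \<bar>\<kappa> - 1\<bar> * (\<Prod>k<i. (1 - pmin * \<delta> * lr k)) * x q) \<longlonglongrightarrow> 0"
    using prod_one_minus_LIMSEQ_zero[OF assms(3) a assms(4)]
    by (intro tendsto_mult_left_zero tendsto_mult_right_zero)
  then have "(\<lambda>i. EQ p c lr sel (\<lambda>q'. \<kappa> * x q') i q - x q) \<longlonglongrightarrow> 0"
    by (rule Lim_null_comparison[rotated])
       (use EQ_error_bound[OF fin fixpt x0 \<delta>(3,1) assms(3,6) _ a(2)] assms(5) in
         \<open>auto simp: less_imp_le\<close>)
  then show "(\<lambda>i. EQ p c lr sel (\<lambda>q'. \<kappa> * enn2real (cstar p c q')) i q) \<longlonglongrightarrow> enn2real (cstar p c q)"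
    by (simp add: LIM_zero_iff x_def)
qed

end
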